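(* Let $I=\langle N,M,V\rangle$ be an ordered instance of chores and let $i\in N$ be an agent with an MMS partition $A=\langle A_1,\dots,A_n\rangle$ containing a bundle $B$ with $|B|=2$ and $B\cap\{1,2,\dots,n-1\}=\emptyset$. Then $i$ has an MMS partition $A'=\langle A'_1,\dots,A'_n\rangle$ such that (i) $|A_j|=|A'_j|$ for all $j\in N$, (ii) $\{n,n+1\}$ is one of the bundles of $A'$, and (iii) each chore $g\in\{1,2,\dots,n-1\}$ lies in the bundle with the same index in $A$ and in $A'$.
   Context: An instance of chores $I=\langle N,M,V\rangle$ has agents $N=\{1,\dots,n\}$, chores $M=\{1,\dots,m\}$ and additive valuations $v_i$ with $v_i(\emptyset)=0$, $v_i(S)=\sum_{g\in S}v_i(\{g\})$ and $v_{ij}:=v_i(\{j\})\le 0$. It is ordered if $v_{ij}\le v_{i(j+1)}$ for all $i\in N$ and $1\le j<m$ (so chore $1$ is the worst). An allocation ($n$-partition) is an ordered $n$-tuple of pairwise disjoint, possibly empty subsets of $M$ with union $M$. The maximin share of $i$ is $\mu_i=\max_A\min_j v_i(A_j)$ over all allocations; an MMS partition of $i$ is an allocation $A$ with $v_i(A_j)\ge\mu_i$ for all $j$. *)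

theory Defs
  imports Complex_Main
begin

text \<open>Agents are 1..n, chores are 1..m; v i g is the (non-positive) value of chore g for agent i.
An allocation is A :: nat \<Rightarrow> nat set, where only the bundles A 1, ..., A n matter.\<close>

definition is_alloc :: "nat \<Rightarrow> nat \<Rightarrow> (nat \<Rightarrow> nat set) \<Rightarrow> bool" where
  "is_alloc n m A \<longleftrightarrow>
     (\<forall>j\<in>{1..n}. \<forall>k\<in>{1..n}. j \<noteq> k \<longrightarrow> A j \<inter> A k = {}) \<and>
     (\<Union>j\<in>{1..n}. A j) = {1..m}"

definition bval :: "(nat \<Rightarrow> nat \<Rightarrow> real) \<Rightarrow> nat \<Rightarrow> nat set \<Rightarrow> real" where
  "bval v i S = (\<Sum>g\<in>S. v i g)"

definition chores_instance :: "nat \<Rightarrow> nat \<Rightarrow> (nat \<Rightarrow> nat \<Rightarrow> real) \<Rightarrow> bool" where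
  "chores_instance n m v \<longleftrightarrow> (\<forall>i\<in>{1..n}. \<forall>g\<in>{1..m}. v i g \<le> 0)"

definition ordered_instance :: "nat \<Rightarrow> nat \<Rightarrow> (nat \<Rightarrow> nat \<Rightarrow> real) \<Rightarrow> bool" where
  "ordered_instance n m v \<longleftrightarrow> (\<forall>i\<in>{1..n}. \<forall>j. 1 \<le> j \<and> j < m \<longrightarrow> v i j \<le> v i (Suc j))"

definition mms :: "nat \<Rightarrow> nat \<Rightarrow> (nat \<Rightarrow> nat \<Rightarrow> real) \<Rightarrow> nat \<Rightarrow> real" where
  "mms n m v i = Max {Min ((\<lambda>j. bval v i (A j)) ` {1..n}) | A. is_alloc n m A}"

definition mms_partition :: "nat \<Rightarrow> nat \<Rightarrow> (nat \<Rightarrow> nat \<Rightarrow> real) \<Rightarrow> nat \<Rightarrow> (nat \<Rightarrow> nat set) \<Rightarrow> bool" where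
  "mms_partition n m v i A \<longleftrightarrow> is_alloc n m A \<and> (\<forall>j\<in>{1..n}. bval v i (A j) \<ge> mms n m v i)"

end

theory Submission
  imports Defs "HOL-Combinatorics.Transposition"
begin

text \<open>Among the chores 1, ..., n+1 two share a bundle of any allocation, and since chores are
non-positive and ordered that bundle is worth at most v(n) + v(n+1); hence so is the maximin
share. Now relabel the chores: if B = {a, b} with n \<le> a < b, the permutation
(b n+1) \<circ> (a n) sends B onto {n, n+1}, fixes every chore below n, and sends every chore
outside B to a chore with an index at least as large. Bundles other than B can only gain
value, and the image of B is worth v(n) + v(n+1), which is at least the maximin share.\<close>

lemma ordered_instance_mono:
  assumes "ordered_instance n m v" "i \<in> {1..n}" "1 \<le> g" "g \<le> h" "h \<le> m"
  shows "v i g \<le> v i h"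
  using assms(4,5)
proof (induction h rule: dec_induct)
  case base
  then show ?case by simp
next
  case (step k)
  then have "v i k \<le> v i (Suc k)"
    using assms(1-3) unfolding ordered_instance_def by auto
  with step show ?case by simp
qed

lemma is_alloc_bundle_subset: "is_alloc n m A \<Longrightarrow> j \<in> {1..n} \<Longrightarrow> A j \<subseteq> {1..m}"
  unfolding is_alloc_def by blast

lemma is_alloc_disjoint:
  "is_alloc n m A \<Longrightarrow> j \<in> {1..n} \<Longrightarrow> k \<in> {1..n} \<Longrightarrow> j \<noteq> k \<Longrightarrow> A j \<inter> A k = {}"
  unfolding is_alloc_def by blast

lemma is_alloc_covers: "is_alloc n m A \<Longrightarrow> g \<in> {1..m} \<Longrightarrow> \<exists>j\<in>{1..n}. g \<in> A j"
  unfolding is_alloc_def by blast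

lemma mms_partition_le_bval:
  "mms_partition n m v i A \<Longrightarrow> j \<in> {1..n} \<Longrightarrow> mms n m v i \<le> bval v i (A j)"
  unfolding mms_partition_def by blast

lemma bval_le_pair:
  assumes "chores_instance n m v" "i \<in> {1..n}" "S \<subseteq> {1..m}" "g \<in> S" "h \<in> S" "g \<noteq> h"
  shows "bval v i S \<le> v i g + v i h"
proof -
  have fin: "finite S"
    using assms(3) finite_subset by blast
  have "bval v i S = (\<Sum>x\<in>{g, h}. v i x) + (\<Sum>x\<in>S - {g, h}. v i x)"
    unfolding bval_def using fin assms(4,5)
    by (metis empty_subsetI insert_subset sum.subset_diff add.commute)
  also have "(\<Sum>x\<in>S - {g, h}. v i x) \<le> 0"
    using assms(1-3) unfolding chores_instance_def by (intro sum_nonpos) auto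
  finally show ?thesis
    using assms(6) by simp
qed

lemma is_alloc_pigeonhole:
  assumes "is_alloc n m A" "n < m"
  shows "\<exists>j\<in>{1..n}. \<exists>g h. 1 \<le> g \<and> g < h \<and> h \<le> n + 1 \<and> g \<in> A j \<and> h \<in> A j"
proof -
  define owner where "owner g = (SOME j. j \<in> {1..n} \<and> g \<in> A j)" for g
  have owner: "owner g \<in> {1..n} \<and> g \<in> A (owner g)" if "g \<in> {1..n+1}" for g
  proof -
    have "\<exists>j. j \<in> {1..n} \<and> g \<in> A j"
      using that assms(2) is_alloc_covers[OF assms(1), of g] by auto
    then show ?thesis
      unfolding owner_def by (rule someI_ex)
  qed
  have "owner ` {1..n+1} \<subseteq> {1..n}"
    using owner by blast
  then have "card (owner ` {1..n+1}) \<le> card {1..n}"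
    by (intro card_mono) auto
  then have "card (owner ` {1..n+1}) < card {1..n+1}"
    by simp
  then have "\<not> inj_on owner {1..n+1}"
    by (rule pigeonhole)
  then obtain g h where gh: "g \<in> {1..n+1}" "h \<in> {1..n+1}" "g < h" "owner g = owner h"
    unfolding inj_on_def by (metis linorder_neqE_nat)
  then show ?thesis
    using owner[of g] owner[of h] by (intro bexI[of _ "owner g"]) auto
qed

lemma mms_le_value_n_Suc_n:
  assumes ch: "chores_instance n m v" and ord: "ordered_instance n m v" and i: "i \<in> {1..n}"
    and mp: "mms_partition n m v i A" and "n < m"
  shows "mms n m v i \<le> v i n + v i (n + 1)"
proof -
  have al: "is_alloc n m A"
    using mp unfolding mms_partition_def by simp
  obtain j g h where j: "j \<in> {1..n}" and gh: "1 \<le> g" "g < h" "h \<le> n + 1" "g \<in> A j" "h \<in> A j"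
    using is_alloc_pigeonhole[OF al \<open>n < m\<close>] by blast
  have "mms n m v i \<le> bval v i (A j)"
    using mms_partition_le_bval[OF mp j] .
  also have "\<dots> \<le> v i g + v i h"
    using bval_le_pair[OF ch i is_alloc_bundle_subset[OF al j]] gh by simp
  also have "\<dots> \<le> v i n + v i (n + 1)"
    using ordered_instance_mono[OF ord i] gh \<open>n < m\<close> by (intro add_mono) auto
  finally show ?thesis .
qed

lemma is_alloc_relabel:
  assumes "is_alloc n m A" "bij_betw p {1..m} {1..m}"
  shows "is_alloc n m (\<lambda>j. p ` A j)"
  unfolding is_alloc_def
proof (intro conjI ballI impI)
  fix j k assume jk: "j \<in> {1..n}" "k \<in> {1..n}" "j \<noteq> k"
  have "p ` A j \<inter> p ` A k = p ` (A j \<inter> A k)"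
    using is_alloc_bundle_subset[OF assms(1)] jk bij_betw_imp_inj_on[OF assms(2)]
    by (intro inj_on_image_Int[symmetric]) auto
  then show "p ` A j \<inter> p ` A k = {}"
    using is_alloc_disjoint[OF assms(1) jk] by simp
next
  have "(\<Union>j\<in>{1..n}. p ` A j) = p ` (\<Union>j\<in>{1..n}. A j)"
    by auto
  then show "(\<Union>j\<in>{1..n}. p ` A j) = {1..m}"
    using assms unfolding is_alloc_def bij_betw_def by simp
qed

lemma bval_le_bval_image:
  assumes ord: "ordered_instance n m v" and i: "i \<in> {1..n}"
    and S: "S \<subseteq> {1..m}" and p: "bij_betw p {1..m} {1..m}" and up: "\<forall>g\<in>S. g \<le> p g"
  shows "bval v i S \<le> bval v i (p ` S)"
proof -
  have "bval v i S \<le> (\<Sum>g\<in>S. v i (p g))"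
    unfolding bval_def
  proof (rule sum_mono)
    fix g assume "g \<in> S"
    moreover have "p g \<in> {1..m}"
      using \<open>g \<in> S\<close> S p bij_betwE by blast
    ultimately show "v i g \<le> v i (p g)"
      using ordered_instance_mono[OF ord i] S up by auto
  qed
  also have "\<dots> = bval v i (p ` S)"
    unfolding bval_def using inj_on_subset[OF bij_betw_imp_inj_on[OF p] S]
    by (simp add: sum.reindex)
  finally show ?thesis .
qed

lemma mms_partition_relabel:
  assumes ord: "ordered_instance n m v" and i: "i \<in> {1..n}"
    and mp: "mms_partition n m v i A" and k: "k \<in> {1..n}"
    and p: "bij_betw p {1..m} {1..m}" and up: "\<forall>g\<in>{1..m} - A k. g \<le> p g"
    and image_k: "mms n m v i \<le> bval v i (p ` A k)"
  shows "mms_partition n m v i (\<lambda>j. p ` A j)"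
  unfolding mms_partition_def
proof (intro conjI ballI)
  have al: "is_alloc n m A"
    using mp unfolding mms_partition_def by simp
  then show "is_alloc n m (\<lambda>j. p ` A j)"
    using p by (rule is_alloc_relabel)
  fix j assume j: "j \<in> {1..n}"
  show "mms n m v i \<le> bval v i (p ` A j)"
  proof (cases "j = k")
    case False
    then have "\<forall>g\<in>A j. g \<le> p g"
      using up is_alloc_disjoint[OF al j k] is_alloc_bundle_subset[OF al j] by blast
    then have "bval v i (A j) \<le> bval v i (p ` A j)"
      using bval_le_bval_image[OF ord i is_alloc_bundle_subset[OF al j] p] by blast
    then show ?thesis
      using mms_partition_le_bval[OF mp j] by linarith
  qed (use image_k in simp)
qed

lemma transpose_pair_image:
  fixes a b n :: nat
  assumes "n \<le> a" "a < b"
  shows "(transpose b (n + 1) \<circ> transpose a n) ` {a, b} = {n, n + 1}"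
  using assms by (auto simp: transpose_def)

lemma transpose_pair_increasing:
  fixes a b n g :: nat
  assumes "n \<le> a" "a < b" "g \<notin> {a, b}"
  shows "g \<le> (transpose b (n + 1) \<circ> transpose a n) g"
  using assms by (auto simp: transpose_def)

lemma transpose_pair_fixes_below:
  fixes a b n g :: nat
  assumes "n \<le> a" "a < b" "g < n"
  shows "(transpose b (n + 1) \<circ> transpose a n) g = g"
  using assms by (auto simp: transpose_def)

lemma bij_betw_transpose_pair:
  fixes a b n m :: nat
  assumes "1 \<le> n" "n \<le> a" "a < b" "b \<le> m"
  shows "bij_betw (transpose b (n + 1) \<circ> transpose a n) {1..m} {1..m}"
  using assms by (intro bij_betw_trans[of _ _ "{1..m}"] bij_betw_transpose_iff) auto

lemma fixed_point_mem_image_iff: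
  assumes "inj p" "p g = g"
  shows "g \<in> p ` S \<longleftrightarrow> g \<in> S"
  using assms by (metis image_iff inj_image_mem_iff)

theorem lemma15:
  fixes n m i :: nat and v :: "nat \<Rightarrow> nat \<Rightarrow> real" and A :: "nat \<Rightarrow> nat set" and B :: "nat set"
  assumes "n \<ge> 1"
    and "chores_instance n m v"
    and "ordered_instance n m v"
    and "i \<in> {1..n}"
    and "mms_partition n m v i A"
    and "B \<in> A ` {1..n}"
    and "card B = 2"
    and "B \<inter> {1..n-1} = {}"
  shows "\<exists>A'. mms_partition n m v i A' \<and>
           (\<forall>j\<in>{1..n}. card (A j) = card (A' j)) \<and>
           {n, n+1} \<in> A' ` {1..n} \<and>
           (\<forall>g\<in>{1..n-1}. \<forall>j\<in>{1..n}. g \<in> A j \<longleftrightarrow> g \<in> A' j)"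
proof -
  obtain k where k: "k \<in> {1..n}" "A k = B"
    using assms(6) by auto
  have "B \<subseteq> {1..m}"
    using assms(5) k is_alloc_bundle_subset unfolding mms_partition_def by blast
  moreover obtain a b where ab: "B = {a, b}" "a < b"
    using assms(7) by (metis card_2_iff linorder_neqE_nat insert_commute)
  ultimately have bounds: "n \<le> a" "b \<le> m"
    using assms(8) by fastforce+
  define p where "p = transpose b (n + 1) \<circ> transpose a n"
  have bij_p: "bij_betw p {1..m} {1..m}"
    unfolding p_def using assms(1) bounds ab by (intro bij_betw_transpose_pair) auto
  have inj_p: "inj p"
    unfolding p_def by (simp add: inj_compose inj_transpose)
  have image_B: "p ` B = {n, n + 1}"
    unfolding p_def ab(1) using transpose_pair_image bounds ab(2) by blast
  have "mms n m v i \<le> bval v i (p ` B)"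
    using mms_le_value_n_Suc_n[OF assms(2-5)] bounds ab image_B
    by (simp add: bval_def)
  then have "mms_partition n m v i (\<lambda>j. p ` A j)"
    using mms_partition_relabel[OF assms(3,4,5) k(1) bij_p] transpose_pair_increasing bounds ab k
    unfolding p_def by auto
  moreover have "p g = g" if "g \<in> {1..n-1}" for g
    unfolding p_def using transpose_pair_fixes_below bounds ab that by auto
  moreover have "{n, n + 1} \<in> (\<lambda>j. p ` A j) ` {1..n}"
    using image_B k by (intro image_eqI[where x = k]) auto
  ultimately show ?thesis
    using inj_p fixed_point_mem_image_iff[OF inj_p]
    by (intro exI[of _ "\<lambda>j. p ` A j"]) (auto simp: card_image inj_on_subset)
qed

end
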